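(* Let $K\subset M^{3\times3}$ be a three-dimensional subspace without Rank-$1$ connections. Then there exists $\beta\in\mathbb{R}^{q_0}\setminus\{0\}$ with $\sum_{k=1}^{q_0}\beta_kM_k(X)\ge0$ for all $X\in K$ and $\sum_k\beta_kM_k\not\equiv0$ on $K$, where $M_1,\dots,M_{q_0}$ are all the $2\times2$ minors of $3\times3$ matrices.
   Context: A set has Rank-$1$ connections if it contains $A\ne B$ with $\mathrm{Rank}(A-B)=1$. *)

theory Defs
  imports "HOL-Analysis.Analysis"
begin

definition has_rank1_connections :: "(real^3^3) set \<Rightarrow> bool" where
  "has_rank1_connections S \<longleftrightarrow> (\<exists>A\<in>S. \<exists>B\<in>S. A \<noteq> B \<and> rank (A - B) = 1)"

text \<open>Index set of the 2x2 minors of a 3x3 matrix: a pair of rows i1 < i2 and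
  a pair of columns j1 < j2 (there are q0 = 9 of them).\<close>
definition minor_idx :: "((3 \<times> 3) \<times> (3 \<times> 3)) set" where
  "minor_idx = {((i1, i2), (j1, j2)). i1 < i2 \<and> j1 < j2}"

definition minor2 :: "((3 \<times> 3) \<times> (3 \<times> 3)) \<Rightarrow> real^3^3 \<Rightarrow> real" where
  "minor2 idx X = (case idx of ((i1, i2), (j1, j2)) \<Rightarrow>
      X $ i1 $ j1 * X $ i2 $ j2 - X $ i1 $ j2 * X $ i2 $ j1)"

end

theory Submission
  imports Defs "HOL-Real_Asymp.Real_Asymp"
begin

text \<open>Suppose no such \<open>\<beta>\<close> exists. Write \<open>X(t) = t\<^sub>1 X\<^sub>1 + t\<^sub>2 X\<^sub>2 + t\<^sub>3 X\<^sub>3\<close> for a basis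
  of \<open>K\<close>. Each \<open>\<beta>\<close> turns \<open>\<Sum>\<^sub>k \<beta>\<^sub>k M\<^sub>k(X(t))\<close> into a quadratic form in \<open>t\<close>; the matrices of these
  forms make up a linear space \<open>L\<close> of symmetric matrices containing no positive semidefinite
  matrix of nonzero trace. Separating \<open>L\<close> from the convex hull of the matrices \<open>v v\<^sup>T\<close>,
  \<open>|v| = 1\<close>, yields a positive definite \<open>P\<close> orthogonal to \<open>L\<close>. Orthogonality to the single
  minors says that the matrices \<open>R\<^sub>a\<close> mapping \<open>t\<close> to the \<open>a\<close>-th row of \<open>X(t)\<close> satisfy
  \<open>R\<^sub>a P R\<^sub>b\<^sup>T = R\<^sub>b P R\<^sub>a\<^sup>T\<close>. This forces some \<open>t \<noteq> 0\<close> for which all rows of \<open>X(t)\<close> are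
  parallel: by simultaneous diagonalisation if some combination of the \<open>R\<^sub>a\<close> is invertible,
  via a common left kernel of the \<open>R\<^sub>a\<close> if all combinations are singular but one has rank two,
  and directly if all combinations have rank at most one. Then \<open>X(t)\<close> is a rank-one matrix
  in \<open>K\<close>, which is a rank-one connection with \<open>0\<close>.\<close>

unbundle cross3_syntax

section \<open>Matrix algebra\<close>

definition pos_def :: "real^'n^'n \<Rightarrow> bool" where
  "pos_def P \<longleftrightarrow> (\<forall>x. x \<noteq> 0 \<longrightarrow> 0 < x \<bullet> (P *v x))"

lemma det_eq_0_iff_nontrivial_kernel:
  fixes A :: "real^'n^'n"
  shows "det A = 0 \<longleftrightarrow> (\<exists>x. x \<noteq> 0 \<and> A *v x = 0)"
  using det_eq_0_rank less_rank_noninjective vec.inj_iff_eq_0 by blast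

lemma det_nz_matrix_vector_cancel:
  fixes A :: "real^'n^'n"
  assumes "det A \<noteq> 0" "A *v x = A *v y"
  shows "x = y"
proof -
  have "A *v (x - y) = 0"
    using assms(2) by (simp add: matrix_vector_mult_diff_distrib)
  then show ?thesis
    using assms(1) det_eq_0_iff_nontrivial_kernel[of A] by (metis eq_iff_diff_eq_0)
qed

lemma pos_def_det_nz: "pos_def P \<Longrightarrow> det P \<noteq> 0"
  unfolding pos_def_def det_eq_0_iff_nontrivial_kernel by (metis inner_zero_right less_irrefl)

lemma symmetric_matrix_inner:
  fixes S :: "real^'n^'n"
  assumes "transpose S = S"
  shows "(S *v x) \<bullet> y = x \<bullet> (S *v y)"
  by (metis assms dot_lmul_matrix transpose_matrix_vector)

lemma matrix_vector_mult_component: "(A *v x) $ i = A$i \<bullet> x"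
  for A :: "real^'n^'m"
  by (simp add: matrix_vector_mult_def inner_vec_def mult.commute)

lemma matrix_vector_mult_uminus: "(- A) *v x = - (A *v x)"
  for A :: "real^'n^'m"
  by (simp add: matrix_vector_mult_def vec_eq_iff sum_negf)

lemma transpose_add: "transpose (A + B) = transpose A + transpose B"
  for A B :: "real^'n^'m"
  by (simp add: transpose_def vec_eq_iff)

lemma matrix_add_rdistrib: "(A + B) ** C = A ** C + B ** C"
  for A B :: "real^'n^'m" and C :: "real^'k^'n"
  by (simp add: matrix_matrix_mult_def vec_eq_iff sum.distrib algebra_simps)

lemma matrix_scaleR_left: "(c *\<^sub>R A) ** B = c *\<^sub>R (A ** B)"
  for A :: "real^'n^'m" and B :: "real^'k^'n"
  by (simp add: matrix_matrix_mult_def vec_eq_iff sum_distrib_left algebra_simps)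

lemma matrix_scaleR_right: "A ** (c *\<^sub>R B) = c *\<^sub>R (A ** B)"
  for A :: "real^'n^'m" and B :: "real^'k^'n"
  by (simp add: matrix_matrix_mult_def vec_eq_iff sum_distrib_left algebra_simps)

lemma inner_transpose: "transpose A \<bullet> B = A \<bullet> transpose B"
  for A B :: "real^'n^'n"
proof -
  have "transpose A \<bullet> B = (\<Sum>i\<in>UNIV. \<Sum>j\<in>UNIV. A$j$i * B$i$j)"
    by (simp add: inner_vec_def transpose_def)
  also have "\<dots> = (\<Sum>j\<in>UNIV. \<Sum>i\<in>UNIV. A$j$i * B$i$j)"
    by (rule sum.swap)
  also have "\<dots> = A \<bullet> transpose B"
    by (simp add: inner_vec_def transpose_def)
  finally show ?thesis .
qed

lemma symmetric_bilinear_swap: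
  fixes P :: "real^'n^'n"
  assumes "transpose P = P"
  shows "(\<Sum>i\<in>UNIV. \<Sum>j\<in>UNIV. f j * P$i$j * g i) = (\<Sum>i\<in>UNIV. \<Sum>j\<in>UNIV. f i * P$i$j * g j)"
proof -
  have P: "P$j$i = P$i$j" for i j
    using assms by (metis transpose_def vec_lambda_beta)
  have "(\<Sum>i\<in>UNIV. \<Sum>j\<in>UNIV. f j * P$i$j * g i) = (\<Sum>j\<in>UNIV. \<Sum>i\<in>UNIV. f j * P$i$j * g i)"
    by (rule sum.swap)
  also have "\<dots> = (\<Sum>i\<in>UNIV. \<Sum>j\<in>UNIV. f i * P$i$j * g j)"
    by (simp add: P)
  finally show ?thesis .
qed

lemma pos_def_congruence:
  fixes A P :: "real^'n^'n"
  assumes "pos_def P" "det A \<noteq> 0"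
  shows "pos_def (A ** P ** transpose A)"
  unfolding pos_def_def
proof (intro allI impI)
  fix x :: "real^'n"
  assume "x \<noteq> 0"
  then have "transpose A *v x \<noteq> 0"
    using assms(2) det_eq_0_iff_nontrivial_kernel[of "transpose A"] by (metis det_transpose)
  then have "0 < (transpose A *v x) \<bullet> (P *v (transpose A *v x))"
    using assms(1) unfolding pos_def_def by blast
  also have "\<dots> = x \<bullet> ((A ** P ** transpose A) *v x)"
    by (simp add: dot_lmul_matrix[symmetric] flip: matrix_vector_mul_assoc)
  finally show "0 < x \<bullet> ((A ** P ** transpose A) *v x)" .
qed

lemma congruence_inverse:
  fixes A P G :: "real^'n^'n"
  assumes G: "G ** (A ** P ** transpose A) = mat 1" and "det A \<noteq> 0"
  shows "transpose A ** G ** A ** P = mat 1"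
proof -
  obtain H where H: "transpose A ** H = mat 1"
    using assms(2) invertible_det_nz invertible_def by (metis det_transpose)
  have "(transpose A ** G ** A ** P) ** transpose A = transpose A ** (G ** (A ** P ** transpose A))"
    by (simp add: matrix_mul_assoc)
  then have "(transpose A ** G ** A ** P) ** transpose A = transpose A"
    by (simp add: G)
  then have "(transpose A ** G ** A ** P) ** (transpose A ** H) = transpose A ** H"
    by (simp add: matrix_mul_assoc)
  then show ?thesis
    by (simp add: H)
qed

definition lincomb :: "('i::finite \<Rightarrow> 'a::real_vector) \<Rightarrow> real^'i \<Rightarrow> 'a" where
  "lincomb B c = (\<Sum>i\<in>UNIV. c$i *\<^sub>R B i)"

lemma lincomb_3: "lincomb B c = c$1 *\<^sub>R B 1 + c$2 *\<^sub>R B 2 + c$3 *\<^sub>R B 3"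
  for B :: "3 \<Rightarrow> 'a::real_vector"
  by (simp add: lincomb_def sum_3)

lemma lincomb_add: "lincomb B (c + d) = lincomb B c + lincomb B d"
  by (simp add: lincomb_def scaleR_add_left sum.distrib)

lemma lincomb_diff: "lincomb B (c - d) = lincomb B c - lincomb B d"
  by (simp add: lincomb_def scaleR_diff_left sum_subtractf)

lemma lincomb_axis: "lincomb B (axis a 1) = B a"
proof -
  have "(\<Sum>i\<in>UNIV. (if i = a then 1 else 0) *\<^sub>R B i) = (\<Sum>i\<in>UNIV. if i = a then B i else 0)"
    by (rule sum.cong) auto
  then show ?thesis
    by (simp add: lincomb_def axis_def)
qed

lemma linear_eq_lincomb_axis:
  assumes "linear f"
  shows "f x = lincomb (\<lambda>i. f (axis i 1)) x"
proof -
  have "f x = f (\<Sum>i\<in>UNIV. x$i *\<^sub>R axis i 1)"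
    using basis_expansion[of x] by (simp add: scalar_mult_eq_scaleR)
  then show ?thesis
    by (simp add: lincomb_def linear_sum[OF assms] linear_scale[OF assms] o_def)
qed

lemma lincomb_parametrization:
  fixes K :: "'a::euclidean_space set"
  assumes "subspace K" "dim K = CARD('i)"
  obtains X :: "'i::finite \<Rightarrow> 'a" where "K = range (lincomb X)" "inj (lincomb X)"
proof -
  obtain f :: "real^'i \<Rightarrow> 'a" where f: "linear f" "f ` UNIV = K" "inj f"
    using subspace_isomorphism[of "UNIV :: (real^'i) set" K] assms by auto
  define X where "X i = f (axis i 1)" for i
  have "f = lincomb X"
    unfolding X_def by (rule ext) (rule linear_eq_lincomb_axis[OF f(1)])
  then show thesis
    using that f(2,3) by blast
qed

section \<open>Eigenvectors of real \<open>3 \<times> 3\<close> matrices\<close>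

lemma cubic_has_real_root: "\<exists>x::real. x^3 + a*x^2 + b*x + c = 0"
proof -
  let ?p = "\<lambda>x::real. x^3 + a*x^2 + b*x + c"
  have "eventually (\<lambda>x. 0 < ?p x) at_top" "eventually (\<lambda>x. ?p x < 0) at_bot"
    by real_asymp+
  then obtain x y where "0 < ?p x" "?p y < 0" "y \<le> x"
    by (metis (no_types, lifting) eventually_at_bot_linorder eventually_at_top_linorder nle_le)
  then show ?thesis
    using IVT[of ?p y 0 x] by (force intro: continuous_intros)
qed

lemma real_eigenvector_exists:
  fixes M :: "real^3^3"
  obtains v l where "v \<noteq> 0" "M *v v = l *\<^sub>R v"
proof -
  define a where "a = - (M$1$1 + M$2$2 + M$3$3)"
  define b where "b = M$1$1 * M$2$2 - M$1$2 * M$2$1 + M$1$1 * M$3$3 - M$1$3 * M$3$1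
    + M$2$2 * M$3$3 - M$2$3 * M$3$2"
  obtain l where "l^3 + a*l^2 + b*l + - det M = 0"
    using cubic_has_real_root by blast
  moreover have "det (l *\<^sub>R mat 1 - M) = l^3 + a*l^2 + b*l + - det M"
    by (simp add: a_def b_def det_3 mat_def power3_eq_cube power2_eq_square algebra_simps)
  ultimately obtain v where "v \<noteq> 0" "(l *\<^sub>R mat 1 - M) *v v = 0"
    using det_eq_0_iff_nontrivial_kernel by metis
  then show thesis
    by (intro that[of v l])
      (simp_all add: matrix_vector_mult_diff_rdistrib flip: scaleR_matrix_vector_assoc)
qed

lemma exists_parallel_images:
  fixes F H :: "real^3^3"
  obtains t where "t \<noteq> 0" "(F *v t) \<times> (H *v t) = 0"
proof (cases "det F = 0")
  case True
  then show thesis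
    using that det_eq_0_iff_nontrivial_kernel by (metis cross_zero_left)
next
  case False
  then obtain G where G: "F ** G = mat 1"
    using invertible_det_nz invertible_def by blast
  obtain t l where t: "t \<noteq> 0" "(G ** H) *v t = l *\<^sub>R t"
    using real_eigenvector_exists by blast
  have "H *v t = F *v ((G ** H) *v t)"
    by (simp add: matrix_vector_mul_assoc matrix_mul_assoc G)
  also have "\<dots> = l *\<^sub>R (F *v t)"
    by (simp add: t(2) matrix_vector_mult_scaleR)
  finally show thesis
    using t(1) that by (simp add: cross_mult_right)
qed

lemma cross_eq_0_imp_scaleR:
  fixes x y :: "real^3"
  assumes "x \<times> y = 0" "y \<noteq> 0"
  shows "x = ((x \<bullet> y) / (y \<bullet> y)) *\<^sub>R y"
proof -
  have "(y \<bullet> y) *\<^sub>R x = (x \<bullet> y) *\<^sub>R y"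
    using arg_cong[OF assms(1), of "(\<times>) y"] by (simp add: Lagrange inner_commute)
  moreover have "y \<bullet> y \<noteq> 0"
    using assms(2) by simp
  ultimately show ?thesis
    by (metis eq_vector_fraction_iff)
qed

lemma orthogonal_cross_imp_scaleR:
  fixes z v w :: "real^3"
  assumes "z \<bullet> v = 0" "z \<bullet> w = 0" "v \<times> w \<noteq> 0"
  shows "\<exists>c. z = c *\<^sub>R (v \<times> w)"
proof -
  have "z \<times> (v \<times> w) = 0"
    using assms by (simp add: Lagrange)
  then show ?thesis
    using cross_eq_0_imp_scaleR assms(3) by blast
qed

lemma commuting_preserves_eigenvector:
  fixes M N :: "real^'n^'n"
  assumes "M ** N = N ** M" "M *v v = m *\<^sub>R v"
  shows "M *v (N *v v) = m *\<^sub>R (N *v v)"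
  by (metis assms matrix_vector_mul_assoc matrix_vector_mult_scaleR)

lemma triple_product_expansion:
  fixes v w u z :: "real^3"
  shows "((v \<times> w) \<bullet> u) *\<^sub>R z
    = (z \<bullet> (w \<times> u)) *\<^sub>R v + (z \<bullet> (u \<times> v)) *\<^sub>R w + (z \<bullet> (v \<times> w)) *\<^sub>R u"
  by (simp add: cross3_def inner_vec_def sum_3 vec_eq_iff forall_3 algebra_simps)

lemma scalar_action_if_basis:
  fixes M :: "real^3^3"
  assumes "(v \<times> w) \<bullet> u \<noteq> 0"
    and "M *v v = m *\<^sub>R v" "M *v w = m *\<^sub>R w" "M *v u = m *\<^sub>R u"
  shows "M *v z = m *\<^sub>R z"
proof -
  let ?c = "(v \<times> w) \<bullet> u"
  have "?c *\<^sub>R (M *v z) = M *v (?c *\<^sub>R z)"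
    by (simp add: matrix_vector_mult_scaleR)
  also have "\<dots> = m *\<^sub>R (?c *\<^sub>R z)"
    unfolding triple_product_expansion
    by (simp add: assms(2-4) matrix_vector_right_distrib matrix_vector_mult_scaleR algebra_simps)
  finally have "?c *\<^sub>R (M *v z) = ?c *\<^sub>R (m *\<^sub>R z)"
    by simp
  then show ?thesis
    using assms(1) by (simp only: scaleR_cancel_left) simp
qed

text \<open>The last two hypotheses say that \<open>K\<close> maps the plane of \<open>v\<close> and \<open>w\<close> into itself. Then \<open>K\<close>
  also preserves the \<open>Q\<close>-orthogonal complement of that plane, the line through
  \<open>x = Q\<^sup>-\<^sup>1 (v \<times> w)\<close>.\<close>
lemma invariant_normal_line:
  fixes Q K :: "real^3^3"
  assumes Q: "transpose Q = Q" "pos_def Q" and K: "transpose (Q ** K) = Q ** K"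
    and vw: "v \<times> w \<noteq> 0" and x: "Q *v x = v \<times> w"
    and "(v \<times> w) \<bullet> (K *v v) = 0" "(v \<times> w) \<bullet> (K *v w) = 0"
  shows "\<exists>c. K *v x = c *\<^sub>R x"
proof -
  have "(Q *v (K *v x)) \<bullet> y = (v \<times> w) \<bullet> (K *v y)" for y
    using symmetric_matrix_inner[OF K, of x y] symmetric_matrix_inner[OF Q(1), of x "K *v y"]
    by (simp add: matrix_vector_mul_assoc x)
  then obtain c where "Q *v (K *v x) = c *\<^sub>R (v \<times> w)"
    using orthogonal_cross_imp_scaleR[OF _ _ vw] assms(6,7) by metis
  then have "Q *v (K *v x) = Q *v (c *\<^sub>R x)"
    by (simp add: x matrix_vector_mult_scaleR)
  then show ?thesis
    using det_nz_matrix_vector_cancel[OF pos_def_det_nz[OF Q(2)]] by blast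
qed

lemma common_eigenvector2:
  fixes Q M N :: "real^3^3"
  assumes Q: "transpose Q = Q" "pos_def Q"
    and M: "transpose (Q ** M) = Q ** M" and N: "transpose (Q ** N) = Q ** N"
    and comm: "M ** N = N ** M"
  obtains x a b where "x \<noteq> 0" "M *v x = a *\<^sub>R x" "N *v x = b *\<^sub>R x"
proof -
  obtain v m where v: "v \<noteq> 0" "M *v v = m *\<^sub>R v"
    using real_eigenvector_exists by blast
  define w where "w = N *v v"
  define u where "u = N *v w"
  have Mw: "M *v w = m *\<^sub>R w"
    unfolding w_def using commuting_preserves_eigenvector[OF comm v(2)] .
  have Mu: "M *v u = m *\<^sub>R u"
    unfolding u_def using commuting_preserves_eigenvector[OF comm Mw] .
  consider "v \<times> w = 0" | "v \<times> w \<noteq> 0" "(v \<times> w) \<bullet> u \<noteq> 0" | "v \<times> w \<noteq> 0" "(v \<times> w) \<bullet> u = 0"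
    by blast
  then show thesis
  proof cases
    case 1
    then have "w = ((w \<bullet> v) / (v \<bullet> v)) *\<^sub>R v"
      using cross_eq_0_imp_scaleR v(1) by (metis cross_skew neg_equal_0_iff_equal)
    then show thesis
      using that v unfolding w_def by blast
  next
    case 2
    obtain x n where "x \<noteq> 0" "N *v x = n *\<^sub>R x"
      using real_eigenvector_exists by blast
    moreover have "M *v x = m *\<^sub>R x"
      using scalar_action_if_basis[OF 2(2) v(2) Mw Mu] .
    ultimately show thesis
      using that by blast
  next
    case 3
    obtain G where G: "Q ** G = mat 1"
      using pos_def_det_nz[OF Q(2)] invertible_det_nz invertible_def by blast
    define x where "x = G *v (v \<times> w)"
    have x: "Q *v x = v \<times> w"
      by (simp add: x_def matrix_vector_mul_assoc G)
    have "\<exists>a. M *v x = a *\<^sub>R x"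
      using invariant_normal_line[OF Q M 3(1) x] v(2) Mw
      by (simp add: dot_cross_self inner_commute)
    moreover have "\<exists>b. N *v x = b *\<^sub>R x"
      using invariant_normal_line[OF Q N 3(1) x] 3(2)
      by (simp add: dot_cross_self inner_commute flip: w_def u_def)
    moreover have "x \<noteq> 0"
      using 3(1) x by auto
    ultimately show thesis
      using that by blast
  qed
qed

lemma common_eigenvector3:
  fixes Q :: "real^3^3" and M :: "3 \<Rightarrow> real^3^3"
  assumes Q: "transpose Q = Q" "pos_def Q"
    and M: "\<And>a. transpose (Q ** M a) = Q ** M a"
    and comm: "\<And>a b. M a ** M b = M b ** M a"
    and sum: "\<And>x. (\<Sum>a\<in>UNIV. c$a *\<^sub>R (M a *v x)) = x"
  obtains x where "x \<noteq> 0" "\<And>a. \<exists>l. M a *v x = l *\<^sub>R x"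
proof -
  obtain a0 where a0: "c$a0 \<noteq> 0"
  proof (rule ccontr)
    assume "\<not> thesis"
    then have "\<forall>a. c$a = 0"
      using that by blast
    then show False
      using sum[of "axis 1 1"] by (simp add: axis_eq_0_iff)
  qed
  \<comment> \<open>by the linear relation, a common eigenvector of the other two matrices is one of \<open>M a0\<close>\<close>
  obtain b b' where others: "\<And>a. a \<noteq> a0 \<Longrightarrow> a = b \<or> a = b'"
    using exhaust_3[of a0] by (metis exhaust_3)
  obtain x lb lb' where x: "x \<noteq> 0" "M b *v x = lb *\<^sub>R x" "M b' *v x = lb' *\<^sub>R x"
    using common_eigenvector2[OF Q M[of b] M[of b'] comm[of b b']] by blast
  have "\<forall>a. \<exists>l. a \<noteq> a0 \<longrightarrow> M a *v x = l *\<^sub>R x"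
    using others x(2,3) by blast
  then obtain l where l: "\<And>a. a \<noteq> a0 \<Longrightarrow> M a *v x = l a *\<^sub>R x"
    by (metis choice)
  define s where "s = (\<Sum>a\<in>UNIV - {a0}. c$a * l a)"
  have "(\<Sum>a\<in>UNIV - {a0}. c$a *\<^sub>R (M a *v x)) = s *\<^sub>R x"
    unfolding s_def scaleR_sum_left by (rule sum.cong) (auto simp: l)
  then have "x = c$a0 *\<^sub>R (M a0 *v x) + s *\<^sub>R x"
    using sum[of x] by (simp add: sum.remove[of UNIV a0])
  then have "c$a0 *\<^sub>R (M a0 *v x) = (1 - s) *\<^sub>R x"
    by (simp add: algebra_simps)
  then have "M a0 *v x = ((1 - s) / c$a0) *\<^sub>R x"
    using a0 by (simp add: eq_vector_fraction_iff)
  then have "\<exists>l. M a *v x = l *\<^sub>R x" for a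
    using l by (cases "a = a0") auto
  then show thesis
    using that x(1) by blast
qed

section \<open>Three matrices with symmetric pairings\<close>

lemma lincomb_pairing_symmetric:
  fixes R :: "3 \<Rightarrow> real^3^3" and P :: "real^3^3"
  assumes sym: "\<And>a b. R a ** P ** transpose (R b) = R b ** P ** transpose (R a)"
  shows "lincomb R d ** P ** transpose (lincomb R e) = lincomb R e ** P ** transpose (lincomb R d)"
proof -
  define G where "G a b = R a ** P ** transpose (R b)" for a b
  have G: "G 2 1 = G 1 2" "G 3 1 = G 1 3" "G 3 2 = G 2 3"
    unfolding G_def using sym by auto
  have expand: "lincomb R x ** P ** transpose (lincomb R y) =
     (x$1*y$1) *\<^sub>R G 1 1 + (x$1*y$2) *\<^sub>R G 1 2 + (x$1*y$3) *\<^sub>R G 1 3 +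
     (x$2*y$1) *\<^sub>R G 2 1 + (x$2*y$2) *\<^sub>R G 2 2 + (x$2*y$3) *\<^sub>R G 2 3 +
     (x$3*y$1) *\<^sub>R G 3 1 + (x$3*y$2) *\<^sub>R G 3 2 + (x$3*y$3) *\<^sub>R G 3 3" for x y
    unfolding lincomb_3 G_def
    by (simp add: matrix_add_rdistrib matrix_add_ldistrib matrix_scaleR_left matrix_scaleR_right
        transpose_add transpose_scalar algebra_simps)
  show ?thesis
    unfolding expand G by (simp add: algebra_simps)
qed

definition collinear_rows :: "real^3^3 \<Rightarrow> bool" where
  "collinear_rows A \<longleftrightarrow> (\<forall>i j. A$i \<times> A$j = 0)"

lemma collinear_rows_iff_cofactors:
  "collinear_rows A \<longleftrightarrow> A$2 \<times> A$3 = 0 \<and> A$3 \<times> A$1 = 0 \<and> A$1 \<times> A$2 = 0"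
proof -
  have "A$i \<times> A$j = 0"
    if "A$2 \<times> A$3 = 0" "A$3 \<times> A$1 = 0" "A$1 \<times> A$2 = 0" for i j
  proof -
    have "A$3 \<times> A$2 = 0" "A$1 \<times> A$3 = 0" "A$2 \<times> A$1 = 0"
      using that by (metis cross_skew neg_equal_0_iff_equal)+
    then show ?thesis
      using that exhaust_3[of i] exhaust_3[of j] by auto
  qed
  then show ?thesis
    unfolding collinear_rows_def by blast
qed

lemma collinear_rows_if_multiples:
  assumes "\<And>i. \<exists>s. A$i = s *\<^sub>R w"
  shows "collinear_rows A"
  unfolding collinear_rows_def
  by (metis assms cross_mult_left cross_mult_right cross_refl scaleR_zero_right)

lemma rank_eq_1_if_collinear_rows:
  fixes A :: "real^3^3"
  assumes "A \<noteq> 0" "collinear_rows A"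
  shows "rank A = 1"
proof -
  obtain i0 where i0: "A$i0 \<noteq> 0"
    using assms(1) by (metis vec_eq_iff zero_index)
  have rows: "rows A = range (\<lambda>i. A$i)"
    by (auto simp: rows_def row_def vec_lambda_eta)
  have "A$i \<in> span {A$i0}" for i
    using cross_eq_0_imp_scaleR[of "A$i" "A$i0"] assms(2) i0 unfolding collinear_rows_def
    by (metis span_base span_scale singletonI)
  then have "dim (rows A) \<le> 1"
    using dim_le_card[of "rows A" "{A$i0}"] unfolding rows by auto
  moreover have "dim (rows A) \<noteq> 0"
    using i0 unfolding rows by (auto simp: dim_eq_0)
  ultimately show ?thesis
    unfolding row_rank_def by linarith
qed

lemma det_eq_inner_cross: "det A = A$1 \<bullet> (A$2 \<times> A$3)"
  for A :: "real^3^3"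
  by (simp add: det_3 cross3_def inner_vec_def sum_3 algebra_simps)

lemma cofactor_expansion:
  fixes A :: "real^3^3"
  shows "((A$2 \<times> A$3) \<bullet> z) *\<^sub>R A$1 + ((A$3 \<times> A$1) \<bullet> z) *\<^sub>R A$2 + ((A$1 \<times> A$2) \<bullet> z) *\<^sub>R A$3
    = det A *\<^sub>R z"
  by (simp add: det_3 cross3_def inner_vec_def sum_3 vec_eq_iff forall_3 algebra_simps)

lemma cofactor_rows_in_kernel:
  fixes A :: "real^3^3"
  assumes "det A = 0"
  shows "A *v (A$2 \<times> A$3) = 0" "A *v (A$3 \<times> A$1) = 0" "A *v (A$1 \<times> A$2) = 0"
proof -
  have "A$1 \<bullet> (A$2 \<times> A$3) = det A" "A$2 \<bullet> (A$3 \<times> A$1) = det A" "A$3 \<bullet> (A$1 \<times> A$2) = det A"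
    by (simp_all add: det_eq_inner_cross cross3_def inner_vec_def sum_3 algebra_simps)
  then show "A *v (A$2 \<times> A$3) = 0" "A *v (A$3 \<times> A$1) = 0" "A *v (A$1 \<times> A$2) = 0"
    using assms
    by (simp_all add: vec_eq_iff forall_3 matrix_vector_mult_component dot_cross_self inner_commute)
qed

lemma kernel_parallel_cross_rows:
  fixes A :: "real^3^3"
  assumes "A *v y = 0"
  shows "y \<times> (A$i \<times> A$j) = 0"
proof -
  have "y \<bullet> A$i = 0" "y \<bullet> A$j = 0"
    using assms by (simp_all add: vec_eq_iff matrix_vector_mult_component inner_commute)
  then show ?thesis
    by (simp add: Lagrange)
qed

lemma cofactor_pairing_eq_0:
  fixes A B :: "real^3^3"
  assumes "det (A + B) = 0" "det (A - B) = 0" "det B = 0"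
  shows "(A$2 \<times> A$3) \<bullet> B$1 + (A$3 \<times> A$1) \<bullet> B$2 + (A$1 \<times> A$2) \<bullet> B$3 = 0"
proof -
  have "det (A + B) - det (A - B)
    = 2 * ((A$2 \<times> A$3) \<bullet> B$1 + (A$3 \<times> A$1) \<bullet> B$2 + (A$1 \<times> A$2) \<bullet> B$3) + 2 * det B"
    by (simp add: det_3 cross3_def inner_vec_def sum_3 algebra_simps)
  then show ?thesis
    using assms by simp
qed

text \<open>For a singular \<open>A\<close> of rank two the adjugate is a multiple of \<open>k l\<^sup>T\<close>, where \<open>k\<close> spans the
  kernel and \<open>l\<close> the left kernel; hence the derivative \<open>tr (adj A B)\<close> of \<open>det\<close> at \<open>A\<close> is a
  multiple of \<open>l \<bullet> (B k)\<close>.\<close>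
lemma corank_one_kernels:
  fixes A :: "real^3^3"
  assumes dA: "det A = 0" and "\<not> collinear_rows A"
  obtains k l where "k \<noteq> 0" "l \<noteq> 0" "l v* A = 0" "\<And>y. A *v y = 0 \<Longrightarrow> y \<times> k = 0"
    "\<And>B. det (A + B) = 0 \<Longrightarrow> det (A - B) = 0 \<Longrightarrow> det B = 0 \<Longrightarrow> l \<bullet> (B *v k) = 0"
proof -
  define c1 where "c1 = A$2 \<times> A$3"
  define c2 where "c2 = A$3 \<times> A$1"
  define c3 where "c3 = A$1 \<times> A$2"
  obtain k where k: "k \<in> {c1, c2, c3}" "k \<noteq> 0"
    using assms(2) unfolding collinear_rows_iff_cofactors c1_def c2_def c3_def by blast
  have kernel: "y \<times> k = 0" if "A *v y = 0" for y
    using k(1) kernel_parallel_cross_rows[OF that] unfolding c1_def c2_def c3_def by blast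
  have parallel: "ci = ((ci \<bullet> k) / (k \<bullet> k)) *\<^sub>R k" if "ci \<in> {c1, c2, c3}" for ci
    using that cross_eq_0_imp_scaleR[OF kernel k(2)] cofactor_rows_in_kernel[OF dA]
    unfolding c1_def c2_def c3_def by blast
  define l :: "real^3" where "l = vector [c1 \<bullet> k, c2 \<bullet> k, c3 \<bullet> k]"
  have "l \<noteq> 0"
  proof
    assume "l = 0"
    then have "c1 \<bullet> k = 0" "c2 \<bullet> k = 0" "c3 \<bullet> k = 0"
      unfolding l_def by (simp_all add: vec_eq_iff forall_3)
    then show False
      using k by auto
  qed
  moreover have "l v* A = 0"
    using cofactor_expansion[of A k] dA
    by (simp add: l_def c1_def c2_def c3_def vector_matrix_mult_def vec_eq_iff sum_3 algebra_simps)
  moreover have "l \<bullet> (B *v k) = 0"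
    if "det (A + B) = 0" "det (A - B) = 0" "det B = 0" for B
  proof -
    have "c1 \<bullet> B$1 + c2 \<bullet> B$2 + c3 \<bullet> B$3 = 0"
      using cofactor_pairing_eq_0[OF that] unfolding c1_def c2_def c3_def .
    then have "((c1 \<bullet> k) * (k \<bullet> B$1) + (c2 \<bullet> k) * (k \<bullet> B$2) + (c3 \<bullet> k) * (k \<bullet> B$3)) / (k \<bullet> k) = 0"
      by (subst (asm) (1 2 3) parallel) (simp_all add: add_divide_distrib)
    moreover have "l \<bullet> (B *v k)
        = (c1 \<bullet> k) * (k \<bullet> B$1) + (c2 \<bullet> k) * (k \<bullet> B$2) + (c3 \<bullet> k) * (k \<bullet> B$3)"
      by (simp add: l_def inner_vec_def sum_3 matrix_vector_mult_component mult_ac)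
    ultimately show ?thesis
      using k(2) by simp
  qed
  ultimately show thesis
    using that k(2) kernel by blast
qed

lemma common_left_kernel:
  fixes R :: "3 \<Rightarrow> real^3^3" and P :: "real^3^3"
  assumes P: "pos_def P"
    and sym: "\<And>a b. R a ** P ** transpose (R b) = R b ** P ** transpose (R a)"
    and singular: "\<And>d. det (lincomb R d) = 0" and "\<not> collinear_rows (lincomb R c)"
  obtains l where "l \<noteq> 0" "\<And>a. l v* R a = 0"
proof -
  define A where "A = lincomb R c"
  obtain k l where k: "k \<noteq> 0" and l: "l \<noteq> 0" "l v* A = 0"
    and kernel: "\<And>y. A *v y = 0 \<Longrightarrow> y \<times> k = 0"
    and derivative: "\<And>B. det (A + B) = 0 \<Longrightarrow> det (A - B) = 0 \<Longrightarrow> det B = 0 \<Longrightarrow> l \<bullet> (B *v k) = 0"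
    using corank_one_kernels[OF singular[of c] assms(4)] unfolding A_def by blast
  have "l v* R a = 0" for a
  proof -
    define z where "z = l v* R a"
    have "A ** P ** transpose (R a) = R a ** P ** transpose A"
      using lincomb_pairing_symmetric[OF sym, where d = c and e = "axis a 1"]
      by (simp add: A_def lincomb_axis)
    then have "A *v (P *v z) = R a *v (P *v (l v* A))"
      by (simp add: z_def matrix_vector_mul_assoc matrix_mul_assoc flip: transpose_matrix_vector)
    then obtain \<mu> where "P *v z = \<mu> *\<^sub>R k"
      using kernel cross_eq_0_imp_scaleR k l(2) by fastforce
    moreover have "z \<bullet> k = 0"
      using derivative[of "R a"] singular[of "c + axis a 1"] singular[of "c - axis a 1"]
        singular[of "axis a 1"]
      by (simp add: z_def A_def lincomb_add lincomb_diff lincomb_axis dot_lmul_matrix)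
    ultimately have "z \<bullet> (P *v z) = 0"
      by simp
    then show ?thesis
      using P unfolding pos_def_def z_def by (metis less_irrefl)
  qed
  then show thesis
    using that l(1) by blast
qed

lemma cross_eq_0_components:
  fixes x y :: "real^3"
  assumes "x \<times> y = 0"
  shows "x$a * y$b = x$b * y$a"
proof -
  have "x$2 * y$3 = x$3 * y$2" "x$3 * y$1 = x$1 * y$3" "x$1 * y$2 = x$2 * y$1"
    using assms by (simp_all add: cross3_def vec_eq_iff forall_3)
  then show ?thesis
    using exhaust_3[of a] exhaust_3[of b] by (auto simp: mult.commute)
qed

lemma collinear_images_if_left_kernel:
  fixes R :: "3 \<Rightarrow> real^3^3"
  assumes l: "l \<noteq> 0" and kernel: "\<And>a. l v* R a = 0"
  obtains t where "t \<noteq> 0" "collinear_rows (\<chi> a. R a *v t)"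
proof -
  obtain j where p0: "l \<times> axis j 1 \<noteq> 0"
    using cross_basis_nonzero[OF l] by blast
  define p where "p = l \<times> axis j 1"
  define q where "q = l \<times> p"
  obtain t where t: "t \<noteq> 0" "((\<chi> a. p v* R a) *v t) \<times> ((\<chi> a. q v* R a) *v t) = 0"
    using exists_parallel_images by blast
  define r where "r a = R a *v t" for a
  have "p \<bullet> l = 0"
    unfolding p_def by (simp add: dot_cross_self)
  then have pq: "p \<times> q = (p \<bullet> p) *\<^sub>R l"
    unfolding q_def by (simp add: Lagrange)
  have "r a \<times> r b = 0" for a b
  proof -
    have "(p \<bullet> r a) * (q \<bullet> r b) = (p \<bullet> r b) * (q \<bullet> r a)"
      using cross_eq_0_components[OF t(2), of a b]
      by (simp add: r_def matrix_vector_mult_component dot_lmul_matrix)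
    then have "(p \<times> q) \<bullet> (r a \<times> r b) = 0"
      by (simp add: dot_cross)
    then have "(p \<bullet> p) * ((r a \<times> r b) \<bullet> l) = 0"
      by (simp add: pq inner_commute)
    then have "(r a \<times> r b) \<bullet> l = 0"
      using p0 by (simp add: p_def)
    moreover have "l \<bullet> r c = 0" for c
      using kernel by (simp add: r_def dot_lmul_matrix[symmetric])
    then have "l \<times> (r a \<times> r b) = 0"
      by (simp add: Lagrange)
    then have "(r a \<times> r b) \<times> l = 0"
      by (metis cross_skew neg_equal_0_iff_equal)
    then have "r a \<times> r b = (((r a \<times> r b) \<bullet> l) / (l \<bullet> l)) *\<^sub>R l"
      using cross_eq_0_imp_scaleR l by blast
    ultimately show ?thesis
      by simp
  qed
  then show thesis
    using that t(1) unfolding collinear_rows_def r_def by simp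
qed

lemma cross_polarization_if_collinear_rows:
  assumes "collinear_rows A" "collinear_rows B" "collinear_rows (A + B)"
  shows "A$i \<times> B$j + B$i \<times> A$j = 0"
proof -
  have "(A + B)$i \<times> (A + B)$j = A$i \<times> A$j + (A$i \<times> B$j + B$i \<times> A$j) + B$i \<times> B$j"
    by (simp add: cross_add_left cross_add_right algebra_simps)
  then show ?thesis
    using assms unfolding collinear_rows_def by simp
qed

text \<open>The rows of \<open>A\<close> are \<open>u\<^sub>i w\<close> with \<open>w = A\<^sub>i\<^sub>0\<close>; polarizing the collinearity of the rows
  of \<open>A + B\<close> gives \<open>u\<^sub>i (w \<times> B\<^sub>j) = u\<^sub>j (w \<times> B\<^sub>i)\<close>, and pairing with \<open>w \<times> x\<close> gives
  \<open>u\<^sub>i (B\<^sub>j \<bullet> x) = u\<^sub>j (B\<^sub>i \<bullet> x)\<close>.\<close>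
lemma collinear_rows_image_of_orthogonal:
  fixes A B :: "real^3^3"
  assumes A: "collinear_rows A" and B: "collinear_rows B" and AB: "collinear_rows (A + B)"
    and w: "A$i0 \<noteq> 0" and x: "A$i0 \<bullet> x = 0"
  shows "B *v x = (B$i0 \<bullet> x) *\<^sub>R (\<chi> i. (A$i \<bullet> A$i0) / (A$i0 \<bullet> A$i0))"
proof -
  define w where "w = A$i0"
  define u :: "real^3" where "u = (\<chi> i. (A$i \<bullet> w) / (w \<bullet> w))"
  have "w \<bullet> w \<noteq> 0"
    using w by (simp add: w_def)
  have rows: "A$i = u$i *\<^sub>R w" for i
    using cross_eq_0_imp_scaleR A w unfolding collinear_rows_def by (simp add: u_def w_def)
  have "u$i0 = 1"
    using \<open>w \<bullet> w \<noteq> 0\<close> by (simp add: u_def w_def)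
  have rel: "u$i * (B$j \<bullet> x) = u$j * (B$i \<bullet> x)" for i j
  proof -
    have "(w \<times> (u$i *\<^sub>R B$j - u$j *\<^sub>R B$i)) \<bullet> (w \<times> x) = 0"
      using cross_polarization_if_collinear_rows[OF A B AB, of i j]
      by (simp add: rows cross_mult_left cross_mult_right cross_skew[of "B$i" w]
          Cross3.right_diff_distrib)
    then have "(w \<bullet> w) * (u$i * (B$j \<bullet> x) - u$j * (B$i \<bullet> x)) = 0"
      using x by (simp add: w_def dot_cross inner_diff_left inner_commute algebra_simps)
    then show ?thesis
      using \<open>w \<bullet> w \<noteq> 0\<close> by simp
  qed
  have "(B *v x)$i = ((B$i0 \<bullet> x) *\<^sub>R u)$i" for i
    using rel[of i0 i] \<open>u$i0 = 1\<close> by (simp add: matrix_vector_mult_component mult.commute)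
  then show ?thesis
    by (simp add: vec_eq_iff u_def w_def)
qed

lemma collinear_images_if_collinear_combinations:
  fixes R :: "3 \<Rightarrow> real^3^3"
  assumes collinear: "\<And>d. collinear_rows (lincomb R d)"
  obtains t where "t \<noteq> 0" "collinear_rows (\<chi> a. R a *v t)"
proof (cases "\<forall>a. R a = 0")
  case True
  then show thesis
    using that[of "axis 1 1"] by (simp add: axis_eq_0_iff collinear_rows_def)
next
  case False
  then obtain a0 where "R a0 \<noteq> 0"
    by blast
  then obtain i0 where i0: "R a0 $ i0 \<noteq> 0"
    by (metis vec_eq_iff zero_index)
  then obtain j where j: "R a0 $ i0 \<times> axis j 1 \<noteq> 0"
    using cross_basis_nonzero by blast
  define x where "x = R a0 $ i0 \<times> axis j 1"
  have "R a0 $ i0 \<bullet> x = 0"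
    by (simp add: x_def dot_cross_self)
  have collinear_axis: "collinear_rows (R b)" "collinear_rows (R a0 + R b)" for b
    using collinear[of "axis b 1"] collinear[of "axis a0 1 + axis b 1"]
    by (simp_all add: lincomb_add lincomb_axis)
  define u :: "real^3" where "u = (\<chi> i. (R a0 $ i \<bullet> R a0 $ i0) / (R a0 $ i0 \<bullet> R a0 $ i0))"
  have "R b *v x = (R b $ i0 \<bullet> x) *\<^sub>R u" for b
    unfolding u_def by (rule collinear_rows_image_of_orthogonal[OF collinear_axis(1)
        collinear_axis(1) collinear_axis(2) i0 \<open>R a0 $ i0 \<bullet> x = 0\<close>])
  then have "collinear_rows (\<chi> b. R b *v x)"
    by (intro collinear_rows_if_multiples[where w = u]) auto
  moreover have "x \<noteq> 0"
    using j by (simp add: x_def)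
  ultimately show thesis
    using that by blast
qed
text \<open>With \<open>Q = A P A\<^sup>T\<close>, the matrices \<open>Q\<^sup>-\<^sup>1 R\<^sub>a P A\<^sup>T\<close> are \<open>Q\<close>-self-adjoint, commute, and their
  combination with the coefficients of \<open>A\<close> is the identity.\<close>
lemma common_eigenvector_of_pairings:
  fixes R :: "3 \<Rightarrow> real^3^3" and A P G :: "real^3^3"
  assumes P: "transpose P = P" "pos_def P"
    and sym: "\<And>a b. R a ** P ** transpose (R b) = R b ** P ** transpose (R a)"
    and A: "A = lincomb R c" "det A \<noteq> 0" and G: "G ** (A ** P ** transpose A) = mat 1"
  obtains x where "x \<noteq> 0" "\<And>a. \<exists>l. (G ** (R a ** P ** transpose A)) *v x = l *\<^sub>R x"
proof -
  define Q where "Q = A ** P ** transpose A"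
  have Q: "transpose Q = Q" "pos_def Q"
    using pos_def_congruence[OF P(2) A(2)]
    by (simp_all add: Q_def matrix_transpose_mul P(1) matrix_mul_assoc)
  have GQ: "G ** Q = mat 1" "Q ** G = mat 1"
    using G matrix_left_right_inverse unfolding Q_def by blast+
  define N where "N a = R a ** P ** transpose A" for a
  have N_alt: "N a = A ** P ** transpose (R a)" for a
    using lincomb_pairing_symmetric[OF sym, where d = "axis a 1" and e = c]
    unfolding N_def A(1) lincomb_axis .
  define M where "M a = G ** N a" for a
  have QM: "Q ** M a = N a" for a
    by (simp add: M_def matrix_mul_assoc GQ(2))
  have "transpose (Q ** M a) = Q ** M a" for a
    by (simp add: QM N_def matrix_transpose_mul P(1) matrix_mul_assoc N_alt[of a, unfolded N_def])
  moreover have "M a ** M b = M b ** M a" for a b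
  proof -
    have NGN: "N a ** G ** N b = R a ** P ** (transpose A ** G ** A ** P) ** transpose (R b)" for a b
      by (simp only: N_def[of a] N_alt[of b] matrix_mul_assoc)
    have "M a ** M b = G ** (N a ** G ** N b)"
      by (simp add: M_def matrix_mul_assoc)
    also have "\<dots> = G ** (N b ** G ** N a)"
      by (simp only: NGN congruence_inverse[OF G A(2)] matrix_mul_rid sym)
    also have "\<dots> = M b ** M a"
      by (simp add: M_def matrix_mul_assoc)
    finally show ?thesis .
  qed
  moreover have "(\<Sum>a\<in>UNIV. c$a *\<^sub>R (M a *v x)) = x" for x
  proof -
    have "c$1 *\<^sub>R N 1 + c$2 *\<^sub>R N 2 + c$3 *\<^sub>R N 3 = Q"
      by (simp add: N_def Q_def A(1) lincomb_3 matrix_add_rdistrib matrix_scaleR_left)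
    moreover have "(\<Sum>a\<in>UNIV. c$a *\<^sub>R (M a *v x))
        = (G ** (c$1 *\<^sub>R N 1 + c$2 *\<^sub>R N 2 + c$3 *\<^sub>R N 3)) *v x"
      by (simp add: sum_3 M_def matrix_add_ldistrib matrix_scaleR_right
          matrix_vector_mult_add_rdistrib scaleR_matrix_vector_assoc)
    ultimately show ?thesis
      by (simp add: GQ(1))
  qed
  ultimately obtain x where "x \<noteq> 0" "\<And>a. \<exists>l. M a *v x = l *\<^sub>R x"
    using common_eigenvector3[OF Q, of M c] by metis
  then show thesis
    using that unfolding M_def N_def by blast
qed

lemma collinear_images_if_invertible:
  fixes R :: "3 \<Rightarrow> real^3^3" and P :: "real^3^3"
  assumes P: "transpose P = P" "pos_def P"
    and sym: "\<And>a b. R a ** P ** transpose (R b) = R b ** P ** transpose (R a)"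
    and invertible: "det (lincomb R c) \<noteq> 0"
  obtains t where "t \<noteq> 0" "collinear_rows (\<chi> a. R a *v t)"
proof -
  define A where "A = lincomb R c"
  define Q where "Q = A ** P ** transpose A"
  have "det Q \<noteq> 0"
    unfolding Q_def A_def using pos_def_det_nz[OF pos_def_congruence[OF P(2) invertible]] .
  then obtain G where G: "G ** Q = mat 1" "Q ** G = mat 1"
    using invertible_det_nz invertible_def by blast
  obtain x where x: "x \<noteq> 0" "\<And>a. \<exists>l. (G ** (R a ** P ** transpose A)) *v x = l *\<^sub>R x"
    using common_eigenvector_of_pairings[OF P sym A_def invertible[folded A_def] G(1)[unfolded Q_def]]
    by blast
  define t where "t = P *v (transpose A *v x)"
  have "t \<noteq> 0"
    using x(1) invertible P(2) det_eq_0_iff_nontrivial_kernel pos_def_det_nz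
    unfolding t_def A_def by (metis det_transpose)
  moreover have "\<exists>s. R a *v t = s *\<^sub>R (A *v t)" for a
  proof -
    obtain l where l: "(G ** (R a ** P ** transpose A)) *v x = l *\<^sub>R x"
      using x(2) by blast
    have "R a *v t = Q *v ((G ** (R a ** P ** transpose A)) *v x)"
      by (simp only: t_def matrix_vector_mul_assoc matrix_mul_assoc G(2) matrix_mul_lid)
    also have "\<dots> = l *\<^sub>R (A *v t)"
      unfolding l
      by (simp only: matrix_vector_mult_scaleR Q_def t_def matrix_vector_mul_assoc matrix_mul_assoc)
    finally show ?thesis
      by blast
  qed
  then have "collinear_rows (\<chi> a. R a *v t)"
    by (intro collinear_rows_if_multiples) simp
  ultimately show thesis
    using that by blast
qed
theorem collinear_images_exist:
  fixes R :: "3 \<Rightarrow> real^3^3" and P :: "real^3^3"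
  assumes "transpose P = P" "pos_def P"
    and "\<And>a b. R a ** P ** transpose (R b) = R b ** P ** transpose (R a)"
  obtains t where "t \<noteq> 0" "collinear_rows (\<chi> a. R a *v t)"
proof -
  consider c where "det (lincomb R c) \<noteq> 0"
    | c where "\<And>d. det (lincomb R d) = 0" "\<not> collinear_rows (lincomb R c)"
    | "\<And>d. collinear_rows (lincomb R d)"
    by blast
  then show thesis
  proof cases
    case 1
    then show thesis
      using collinear_images_if_invertible assms that by blast
  next
    case 2
    then obtain l where "l \<noteq> 0" "\<And>a. l v* R a = 0"
      using common_left_kernel assms(2,3) by blast
    then show thesis
      using collinear_images_if_left_kernel that by blast
  next
    case 3
    then show thesis
      using collinear_images_if_collinear_combinations that by blast
  qed
qed

section \<open>Positive definite matrices orthogonal to a subspace\<close>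

definition outer :: "real^'n \<Rightarrow> real^'n^'n" where
  "outer v = (\<chi> i j. v$i * v$j)"

lemma inner_outer: "A \<bullet> outer v = v \<bullet> (A *v v)"
  by (simp add: outer_def matrix_vector_mult_def inner_vec_def sum_distrib_left mult_ac)

lemma psd_trace_one_if_in_outer_hull:
  fixes S :: "real^'n^'n"
  assumes "S \<in> convex hull (outer ` sphere 0 1)"
  shows "trace S = 1" "0 \<le> x \<bullet> (S *v x)"
proof -
  define D where "D = {S :: real^'n^'n. trace S = 1 \<and> (\<forall>x. 0 \<le> x \<bullet> (S *v x))}"
  have "convex D"
    unfolding convex_def D_def
    by (auto simp: trace_def sum.distrib matrix_vector_mult_add_rdistrib inner_add_right
        simp flip: sum_distrib_left scaleR_matrix_vector_assoc)
  moreover have "outer ` sphere 0 1 \<subseteq> D"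
  proof
    fix Y :: "real^'n^'n"
    assume "Y \<in> outer ` sphere 0 1"
    then obtain v where v: "norm v = 1" "Y = outer v"
      by auto
    have "trace Y = v \<bullet> v"
      by (simp add: v(2) outer_def trace_def inner_vec_def)
    moreover have "x \<bullet> (Y *v x) = (v \<bullet> x)\<^sup>2" for x
      by (simp add: v(2) outer_def matrix_vector_mult_def inner_vec_def sum_distrib_left
          power2_eq_square sum_product mult_ac)
    ultimately show "Y \<in> D"
      using v(1) by (simp add: D_def dot_square_norm)
  qed
  ultimately have "convex hull (outer ` sphere 0 1) \<subseteq> D"
    by (rule hull_minimal[rotated])
  then show "trace S = 1" "0 \<le> x \<bullet> (S *v x)"
    using assms unfolding D_def by blast+
qed

lemma compact_outer_hull: "compact (convex hull (outer ` sphere (0::real^'n) 1))"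
proof -
  have "continuous_on UNIV (outer :: real^'n \<Rightarrow> _)"
    unfolding outer_def by (intro continuous_on_vec_lambda continuous_intros)
  then show ?thesis
    by (intro compact_convex_hull compact_continuous_image) (auto intro: continuous_on_subset)
qed

lemma pos_def_if_negative_on_outer:
  fixes a :: "real^'n^'n"
  assumes "\<And>v. norm v = 1 \<Longrightarrow> a \<bullet> outer v < 0"
  shows "pos_def (- (a + transpose a))"
  unfolding pos_def_def
proof (intro allI impI)
  fix x :: "real^'n"
  assume "x \<noteq> 0"
  then have "(1 / norm x) *\<^sub>R x \<bullet> (a *v ((1 / norm x) *\<^sub>R x)) < 0"
    using assms[of "(1 / norm x) *\<^sub>R x"] by (simp add: inner_outer)
  then have "x \<bullet> (a *v x) / (norm x * norm x) < 0"
    by (simp add: matrix_vector_mult_scaleR)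
  then have "x \<bullet> (a *v x) < 0"
    using \<open>x \<noteq> 0\<close> by (simp add: divide_less_0_iff)
  moreover have "x \<bullet> (transpose a *v x) = x \<bullet> (a *v x)"
    using dot_lmul_matrix[of x a x] by (simp add: inner_commute)
  ultimately show "0 < x \<bullet> (- (a + transpose a) *v x)"
    by (simp add: matrix_vector_mult_uminus matrix_vector_mult_diff_rdistrib inner_diff_right)
qed

text \<open>The functional separating \<open>L\<close> from the trace-one positive semidefinite matrices
  vanishes on \<open>L\<close> and is negative on every \<open>v v\<^sup>T\<close>.\<close>
lemma pos_def_orthogonal_to_subspace:
  fixes L :: "(real^'n^'n) set"
  assumes L: "subspace L" and sym: "\<And>S. S \<in> L \<Longrightarrow> transpose S = S"
    and no_psd: "\<And>S. S \<in> L \<Longrightarrow> \<forall>x. 0 \<le> x \<bullet> (S *v x) \<Longrightarrow> trace S = 0"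
  obtains P where "transpose P = P" "pos_def P" "\<And>S. S \<in> L \<Longrightarrow> P \<bullet> S = 0"
proof -
  define C where "C = convex hull (outer ` sphere (0::real^'n) 1)"
  have "C \<inter> L = {}"
    using no_psd psd_trace_one_if_in_outer_hull unfolding C_def by fastforce
  moreover have "C \<noteq> {}"
    unfolding C_def by simp
  ultimately obtain a b where ab: "\<And>S. S \<in> C \<Longrightarrow> a \<bullet> S < b" "\<And>S. S \<in> L \<Longrightarrow> b < a \<bullet> S"
    using separating_hyperplane_compact_closed[of C L] compact_outer_hull
      subspace_imp_convex[OF L] closed_subspace[OF L] unfolding C_def by blast
  have "b < 0"
    using ab(2) subspace_0[OF L] by force
  have orth: "a \<bullet> S = 0" if "S \<in> L" for S
  proof (rule ccontr)
    assume "a \<bullet> S \<noteq> 0"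
    then show False
      using ab(2)[OF subspace_scale[OF L that, of "(b - 1) / (a \<bullet> S)"]] by simp
  qed
  have "a \<bullet> outer v < 0" if "norm v = 1" for v
    using ab(1)[of "outer v"] \<open>b < 0\<close> that unfolding C_def by (force intro: hull_inc)
  then have "pos_def (- (a + transpose a))"
    by (rule pos_def_if_negative_on_outer)
  moreover have "transpose (- (a + transpose a)) = - (a + transpose a)"
    by (simp add: transpose_def vec_eq_iff)
  moreover have "- (a + transpose a) \<bullet> S = 0" if "S \<in> L" for S
    using orth[OF that] sym[OF that] by (simp add: inner_diff_left inner_transpose)
  ultimately show thesis
    using that by blast
qed

section \<open>Minors as quadratic forms\<close>

definition polar_minor2 :: "((3 \<times> 3) \<times> (3 \<times> 3)) \<Rightarrow> real^3^3 \<Rightarrow> real^3^3 \<Rightarrow> real" where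
  "polar_minor2 idx X Y = (case idx of ((i1, i2), (j1, j2)) \<Rightarrow>
      (X$i1$j1 * Y$i2$j2 + Y$i1$j1 * X$i2$j2 - X$i1$j2 * Y$i2$j1 - Y$i1$j2 * X$i2$j1) / 2)"

lemma polar_minor2_commute: "polar_minor2 k X Y = polar_minor2 k Y X"
  by (cases k) (auto simp: polar_minor2_def algebra_simps)

lemma minor2_lincomb:
  fixes X :: "3 \<Rightarrow> real^3^3"
  shows "minor2 k (lincomb X t) = (\<Sum>i\<in>UNIV. \<Sum>j\<in>UNIV. t$i * t$j * polar_minor2 k (X i) (X j))"
  by (cases k) (auto simp: minor2_def polar_minor2_def lincomb_3 sum_3 field_simps)

definition minor_form :: "(3 \<Rightarrow> real^3^3) \<Rightarrow> (((3 \<times> 3) \<times> (3 \<times> 3)) \<Rightarrow> real) \<Rightarrow> real^3^3" where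
  "minor_form X \<beta> = (\<chi> i j. \<Sum>k\<in>minor_idx. \<beta> k * polar_minor2 k (X i) (X j))"

lemma minor_form_quadratic:
  "t \<bullet> (minor_form X \<beta> *v t) = (\<Sum>k\<in>minor_idx. \<beta> k * minor2 k (lincomb X t))"
  unfolding minor2_lincomb
  by (simp add: minor_form_def inner_vec_def matrix_vector_mult_def sum_3 sum_distrib_left
      sum_distrib_right sum.distrib algebra_simps)

lemma transpose_minor_form: "transpose (minor_form X \<beta>) = minor_form X \<beta>"
  by (simp add: minor_form_def transpose_def vec_eq_iff polar_minor2_commute)

lemma subspace_range_minor_form: "subspace (range (minor_form X))"
  unfolding subspace_def
proof (intro conjI ballI allI)
  show "0 \<in> range (minor_form X)"
    by (rule range_eqI[of _ _ "\<lambda>k. 0"]) (simp add: minor_form_def vec_eq_iff)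
next
  fix S T
  assume "S \<in> range (minor_form X)" "T \<in> range (minor_form X)"
  then obtain \<beta> \<gamma> where "S = minor_form X \<beta>" "T = minor_form X \<gamma>"
    by blast
  then show "S + T \<in> range (minor_form X)"
    by (intro range_eqI[of _ _ "\<lambda>k. \<beta> k + \<gamma> k"])
      (simp add: minor_form_def vec_eq_iff sum.distrib distrib_right)
next
  fix c S
  assume "S \<in> range (minor_form X)"
  then obtain \<beta> where "S = minor_form X \<beta>"
    by blast
  then show "c *\<^sub>R S \<in> range (minor_form X)"
    by (intro range_eqI[of _ _ "\<lambda>k. c * \<beta> k"])
      (simp add: minor_form_def vec_eq_iff sum_distrib_left mult.assoc)
qed

lemma minor_form_indicator:
  assumes "k \<in> minor_idx"
  shows "minor_form X (\<lambda>k'. if k' = k then 1 else 0) = (\<chi> i j. polar_minor2 k (X i) (X j))"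
proof -
  have "(\<Sum>k'\<in>minor_idx. (if k' = k then 1 else 0) * g k') = g k" for g :: "_ \<Rightarrow> real"
    using assms by (simp add: if_distrib[of "\<lambda>c. c * _"] sum.delta cong: if_cong)
  then show ?thesis
    by (simp add: minor_form_def vec_eq_iff)
qed

lemma nonneg_minor_combination_if_psd:
  assumes psd: "\<forall>t. 0 \<le> t \<bullet> (minor_form X \<beta> *v t)" and "trace (minor_form X \<beta>) \<noteq> 0"
  shows "(\<exists>k\<in>minor_idx. \<beta> k \<noteq> 0)
    \<and> (\<forall>t. 0 \<le> (\<Sum>k\<in>minor_idx. \<beta> k * minor2 k (lincomb X t)))
    \<and> (\<exists>t. (\<Sum>k\<in>minor_idx. \<beta> k * minor2 k (lincomb X t)) \<noteq> 0)"
proof -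
  obtain i where i: "minor_form X \<beta> $ i $ i \<noteq> 0"
    using assms(2) unfolding trace_def by (meson sum.neutral)
  have "\<exists>k\<in>minor_idx. \<beta> k \<noteq> 0"
  proof (rule ccontr)
    assume "\<not> (\<exists>k\<in>minor_idx. \<beta> k \<noteq> 0)"
    then have "minor_form X \<beta> $ i $ i = 0"
      by (simp add: minor_form_def)
    then show False
      using i by simp
  qed
  moreover have "0 \<le> (\<Sum>k\<in>minor_idx. \<beta> k * minor2 k (lincomb X t))" for t
    using psd by (simp flip: minor_form_quadratic)
  moreover have "(\<Sum>k\<in>minor_idx. \<beta> k * minor2 k (lincomb X (axis i 1))) \<noteq> 0"
    using i by (simp flip: minor_form_quadratic add: inner_axis' matrix_vector_mult_component inner_axis)
  ultimately show ?thesis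
    by blast
qed

definition row_matrix :: "(3 \<Rightarrow> real^3^3) \<Rightarrow> 3 \<Rightarrow> real^3^3" where
  "row_matrix X a = (\<chi> m i. X i $ a $ m)"

lemma row_matrix_mult: "(\<chi> a. row_matrix X a *v t) = lincomb X t"
  by (simp add: row_matrix_def lincomb_3 matrix_vector_mult_def vec_eq_iff sum_3 algebra_simps)

lemma row_pairing_entry:
  fixes P :: "real^3^3" and X :: "3 \<Rightarrow> real^3^3" and a b m n :: 3
  assumes P: "transpose P = P"
  defines "G \<equiv> row_matrix X a ** P ** transpose (row_matrix X b)"
  shows "P \<bullet> (\<chi> i j. polar_minor2 ((a, b), (m, n)) (X i) (X j)) = G$m$n - G$n$m"
proof -
  define B where "B f g = (\<Sum>i\<in>UNIV. \<Sum>j\<in>UNIV. f i * P$i$j * g j)" for f g :: "3 \<Rightarrow> real"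
  have G: "G$p$q = B (\<lambda>i. X i $ a $ p) (\<lambda>j. X j $ b $ q)" for p q
  proof -
    have "G$p$q = (\<Sum>j\<in>UNIV. (\<Sum>i\<in>UNIV. X i $ a $ p * P$i$j) * X j $ b $ q)"
      by (simp add: G_def matrix_matrix_mult_def transpose_def row_matrix_def)
    also have "\<dots> = (\<Sum>j\<in>UNIV. \<Sum>i\<in>UNIV. X i $ a $ p * P$i$j * X j $ b $ q)"
      by (simp add: sum_distrib_right)
    also have "\<dots> = B (\<lambda>i. X i $ a $ p) (\<lambda>j. X j $ b $ q)"
      unfolding B_def by (rule sum.swap)
    finally show ?thesis .
  qed
  have "P \<bullet> (\<chi> i j. polar_minor2 ((a, b), (m, n)) (X i) (X j))
    = (\<Sum>i\<in>UNIV. \<Sum>j\<in>UNIV. (X i $ a $ m * P$i$j * X j $ b $ n + X j $ a $ m * P$i$j * X i $ b $ n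
        - X i $ a $ n * P$i$j * X j $ b $ m - X j $ a $ n * P$i$j * X i $ b $ m) / 2)"
    by (simp add: inner_vec_def polar_minor2_def field_simps)
  also have "\<dots> = (B (\<lambda>i. X i $ a $ m) (\<lambda>j. X j $ b $ n) + B (\<lambda>i. X i $ a $ m) (\<lambda>j. X j $ b $ n)
      - B (\<lambda>i. X i $ a $ n) (\<lambda>j. X j $ b $ m) - B (\<lambda>i. X i $ a $ n) (\<lambda>j. X j $ b $ m)) / 2"
    unfolding B_def
    by (simp add: sum.distrib sum_subtractf symmetric_bilinear_swap[OF P] flip: sum_divide_distrib)
  finally show ?thesis
    by (simp add: G)
qed

lemma row_pairing_symmetric:
  fixes P :: "real^3^3" and X :: "3 \<Rightarrow> real^3^3"
  assumes P: "transpose P = P"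
    and orth: "\<And>k. k \<in> minor_idx \<Longrightarrow> P \<bullet> (\<chi> i j. polar_minor2 k (X i) (X j)) = 0"
  shows "row_matrix X a ** P ** transpose (row_matrix X b) = row_matrix X b ** P ** transpose (row_matrix X a)"
proof -
  define G where "G a b = row_matrix X a ** P ** transpose (row_matrix X b)" for a b
  have G_transpose: "transpose (G a b) = G b a" for a b
    by (simp add: G_def matrix_transpose_mul P matrix_mul_assoc)
  have "G a b = G b a" if "a < b" for a b
  proof -
    have "G a b $ m $ n = G a b $ n $ m" if "m < n" for m n
      using orth[of "((a, b), (m, n))"] row_pairing_entry[OF P, of a b m n X] \<open>a < b\<close> that
      by (simp add: minor_idx_def G_def)
    then have "G a b $ m $ n = G a b $ n $ m" for m n
      by (cases m n rule: linorder_cases) auto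
    then have "G a b = transpose (G a b)"
      by (simp add: vec_eq_iff transpose_def)
    then show ?thesis
      by (simp add: G_transpose)
  qed
  then have "G a b = G b a"
    by (cases a b rule: linorder_cases) auto
  then show ?thesis
    by (simp add: G_def)
qed

lemma collinear_lincomb_exists:
  fixes P :: "real^3^3" and X :: "3 \<Rightarrow> real^3^3"
  assumes "transpose P = P" "pos_def P"
    and "\<And>k. k \<in> minor_idx \<Longrightarrow> P \<bullet> (\<chi> i j. polar_minor2 k (X i) (X j)) = 0"
  obtains t where "t \<noteq> 0" "collinear_rows (lincomb X t)"
proof (rule collinear_images_exist[OF assms(1,2) row_pairing_symmetric[OF assms(1,3)]])
  fix t
  assume "t \<noteq> 0" "collinear_rows (\<chi> a. row_matrix X a *v t)"
  then show thesis
    using that by (simp add: row_matrix_mult)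
qed

lemma pos_def_orthogonal_to_minor_forms:
  fixes X :: "3 \<Rightarrow> real^3^3"
  assumes no_witness: "\<not> (\<exists>\<beta>. (\<exists>k\<in>minor_idx. \<beta> k \<noteq> 0)
    \<and> (\<forall>Y\<in>range (lincomb X). 0 \<le> (\<Sum>k\<in>minor_idx. \<beta> k * minor2 k Y))
    \<and> (\<exists>Y\<in>range (lincomb X). (\<Sum>k\<in>minor_idx. \<beta> k * minor2 k Y) \<noteq> 0))"
  obtains P where "transpose P = P" "pos_def P"
    "\<And>k. k \<in> minor_idx \<Longrightarrow> P \<bullet> (\<chi> i j. polar_minor2 k (X i) (X j)) = 0"
proof -
  have no_psd: "trace S = 0"
    if S: "S \<in> range (minor_form X)" and psd: "\<forall>x. 0 \<le> x \<bullet> (S *v x)" for S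
  proof (rule ccontr)
    assume "trace S \<noteq> 0"
    obtain \<beta> where "S = minor_form X \<beta>"
      using S by blast
    then show False
      using nonneg_minor_combination_if_psd[of X \<beta>] psd \<open>trace S \<noteq> 0\<close> no_witness by auto
  qed
  have "transpose S = S" if "S \<in> range (minor_form X)" for S
    using that transpose_minor_form by auto
  then obtain P where P: "transpose P = P" "pos_def P"
    and orth: "\<And>S. S \<in> range (minor_form X) \<Longrightarrow> P \<bullet> S = 0"
    using pos_def_orthogonal_to_subspace[OF subspace_range_minor_form _ no_psd] by blast
  have "P \<bullet> (\<chi> i j. polar_minor2 k (X i) (X j)) = 0" if "k \<in> minor_idx" for k
    using orth[OF rangeI, of "\<lambda>k'. if k' = k then 1 else 0"] minor_form_indicator[OF that, of X]
    by simp
  then show thesis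
    using that P by blast
qed

theorem lemma8:
  fixes K :: "(real^3^3) set"
  assumes "subspace K"
    and "dim K = 3"
    and "\<not> has_rank1_connections K"
  shows "\<exists>\<beta> :: ((3 \<times> 3) \<times> (3 \<times> 3)) \<Rightarrow> real.
           (\<exists>k\<in>minor_idx. \<beta> k \<noteq> 0) \<and>
           (\<forall>X\<in>K. (\<Sum>k\<in>minor_idx. \<beta> k * minor2 k X) \<ge> 0) \<and>
           (\<exists>X\<in>K. (\<Sum>k\<in>minor_idx. \<beta> k * minor2 k X) \<noteq> 0)"
proof (rule ccontr)
  assume no_witness: "\<not> ?thesis"
  obtain X :: "3 \<Rightarrow> real^3^3" where K: "K = range (lincomb X)" and inj: "inj (lincomb X)"
    using lincomb_parametrization[OF assms(1), where 'i = 3] assms(2) by auto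
  obtain P where "transpose P = P" "pos_def P"
    "\<And>k. k \<in> minor_idx \<Longrightarrow> P \<bullet> (\<chi> i j. polar_minor2 k (X i) (X j)) = 0"
    using pos_def_orthogonal_to_minor_forms no_witness unfolding K by blast
  then obtain t where "t \<noteq> 0" and collinear: "collinear_rows (lincomb X t)"
    by (rule collinear_lincomb_exists)
  then have "lincomb X t \<noteq> 0"
    using injD[OF inj, of t 0] by (auto simp: lincomb_def)
  moreover have "lincomb X t \<in> K" "0 \<in> K"
    using subspace_0[OF assms(1)] unfolding K by auto
  ultimately have "has_rank1_connections K"
    using rank_eq_1_if_collinear_rows[OF _ collinear] unfolding has_rank1_connections_def by force
  then show False
    using assms(3) by blast
qed

end
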